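(* Suppose the joint distribution $F$ of $\mathbf C$ is smooth and fully supported on $[0,\bar C]^N$. Then for each prosumer $i$ and each fixed $\mathbf x_{-i}\in[0,\bar C]^{N-1}$, the expected penalty $x_i\mapsto \mathbb E[\phi(x_i,\mathbf x_{-i};\mathbf C)]$ is continuously differentiable and convex on $[0,\bar C]$, and it is continuous in $\mathbf x_{-i}$. Consequently $\pi_i(x_i,\mathbf x_{-i},\rho)$ is concave in $x_i$ and jointly continuous in $(x_i,\mathbf x_{-i})$.
   Context: There are $N\ge1$ prosumers with capacities $\mathbf C=(C_1,\dots,C_N)\in[0,\bar C]^N$ with joint cdf $F$; offers $x_j\in[0,\bar C]$, $X=\sum_j x_j$, $\lambda_{RT}>0$, $z^+=\max\{z,0\}$. The penalty of prosumer $i$ is $\phi(x_i,\mathbf x_{-i};\mathbf C)=\lambda_{RT}(X-\sum_j C_j)^+\,(x_i-C_i)^+/\sum_{j=1}^N(x_j-C_j)^+$ (set to $0$ when the denominator vanishes). Prosumer $i$'s payoff is $\pi_i(x_i,\mathbf x_{-i},\rho)=\rho x_i+\mathbb E[u(d^0+C_i-x_i)-\phi(x_i,\mathbf x_{-i};\mathbf C)]$ with $\rho\ge0$, $d^0>\bar C$, and $u$ continuously differentiable, nonnegative, concave, increasing. *)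

theory Defs
  imports "HOL-Analysis.Analysis"
begin

text \<open>Prosumers are indexed by a finite type 'n, so N = CARD('n) >= 1.
  Capacity and offer vectors are elements of real^'n.\<close>

definition pos :: "real \<Rightarrow> real" where
  "pos z = max z 0"

definition cube :: "real \<Rightarrow> (real^'n) set" where
  "cube Cbar = {c. \<forall>j. 0 \<le> c$j \<and> c$j \<le> Cbar}"

text \<open>x with the i-th coordinate replaced by t, i.e. (t, x_{-i}).\<close>
definition upd :: "real^'n \<Rightarrow> 'n \<Rightarrow> real \<Rightarrow> real^'n" where
  "upd x i t = (\<chi> j. if j = i then t else x$j)"

definition penalty :: "real \<Rightarrow> real^'n \<Rightarrow> real^'n \<Rightarrow> 'n \<Rightarrow> real" where
  "penalty lam x c i =
     (let D = (\<Sum>j\<in>UNIV. pos (x$j - c$j)) in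
      if D = 0 then 0
      else lam * pos ((\<Sum>j\<in>UNIV. x$j) - (\<Sum>j\<in>UNIV. c$j)) * pos (x$i - c$i) / D)"

text \<open>The joint distribution F of C is smooth (has a density f w.r.t. Lebesgue
  measure which is continuous on the cube) and fully supported on [0,Cbar]^N
  (f vanishes outside the cube and the support of f is the whole cube).\<close>
definition smooth_full_support :: "((real^'n) \<Rightarrow> real) \<Rightarrow> real \<Rightarrow> bool" where
  "smooth_full_support f Cbar \<longleftrightarrow>
     f \<in> borel_measurable lborel \<and>
     (\<forall>c. 0 \<le> f c) \<and>
     (\<forall>c. c \<notin> cube Cbar \<longrightarrow> f c = 0) \<and>
     integrable lborel f \<and> integral\<^sup>L lborel f = 1 \<and>
     continuous_on (cube Cbar) f \<and>
     closure {c. f c > 0} = cube Cbar"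

definition expect :: "((real^'n) \<Rightarrow> real) \<Rightarrow> ((real^'n) \<Rightarrow> real) \<Rightarrow> real" where
  "expect f g = integral\<^sup>L lborel (\<lambda>c. g c * f c)"

definition exp_penalty :: "((real^'n) \<Rightarrow> real) \<Rightarrow> real \<Rightarrow> real^'n \<Rightarrow> 'n \<Rightarrow> real" where
  "exp_penalty f lam x i = expect f (\<lambda>c. penalty lam x c i)"

definition payoff :: "((real^'n) \<Rightarrow> real) \<Rightarrow> real \<Rightarrow> (real \<Rightarrow> real) \<Rightarrow> real \<Rightarrow> real
                      \<Rightarrow> real^'n \<Rightarrow> 'n \<Rightarrow> real" where
  "payoff f lam u d0 rho x i =
     rho * x$i + expect f (\<lambda>c. u (d0 + c$i - x$i) - penalty lam x c i)"

end

theory Submission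
  imports Defs
begin

text \<open>Write b = x_i - C_i, a = \<Sum>_{j \<noteq> i} (x_j - C_j)^+ and S = \<Sum>_{j \<noteq> i} (x_j - C_j).
  The penalty of prosumer i is then lam (S + b)^+ b^+ / (a + b^+), a function of b alone that
  is 1-Lipschitz, and away from the two kinks b = 0 and S + b = 0 differentiable with a
  derivative that is nondecreasing in b and lies in [0, 1].  Both kinks are hyperplanes in
  the capacity vector C, hence Lebesgue-null, so under a density the expected penalty can be
  differentiated under the integral sign by dominated convergence: its derivative is the
  expectation of the pointwise derivative, which is continuous (dominated convergence again)
  and nondecreasing, so the expected penalty is C^1 and convex.  Continuity in x_{-i} is
  dominated convergence for the continuous and bounded integrand.  The payoff is a linear
  term plus the expectation of the concave u(d^0 + C_i - x_i) minus the convex expected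
  penalty, hence concave.\<close>

lemma borel_measurable_lborel_continuous:
  "continuous_on UNIV g \<Longrightarrow> g \<in> borel_measurable lborel"
  by (simp add: borel_measurable_continuous_onI)

lemma AE_lborel_not_hyperplane:
  fixes a :: "'a::euclidean_space"
  assumes "a \<noteq> 0"
  shows "AE c in lborel. a \<bullet> c \<noteq> t"
proof -
  have "{c. a \<bullet> c = t} \<in> null_sets lebesgue"
    using negligible_hyperplane[of a t] assms by (simp add: negligible_iff_null_sets)
  then obtain N where "N \<in> null_sets lborel" "{c. a \<bullet> c = t} \<subseteq> N"
    by (auto simp: null_sets_completion_iff2)
  then show ?thesis by (intro AE_I'[of N]) auto
qed

lemma continuous_on_truncated_below:
  fixes u :: "real \<Rightarrow> real"
  assumes "continuous_on {0<..} u" "0 < \<delta>"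
  shows "continuous_on UNIV (\<lambda>r. u (max r \<delta>))"
  by (rule continuous_on_compose2[OF assms(1)])
    (use assms(2) in \<open>auto intro!: continuous_intros simp: less_max_iff_disj\<close>)

lemma concave_on_cong_on:
  assumes "concave_on S f" "\<And>x. x \<in> S \<Longrightarrow> f x = g x"
  shows "concave_on S g"
proof -
  have "convex S" using assms(1) by (rule concave_on_imp_convex)
  then show ?thesis
    using assms unfolding concave_on_iff convex_def by auto
qed

lemma concave_on_reflect:
  fixes u :: "real \<Rightarrow> real"
  assumes "concave_on A u" "convex S" "\<And>s. s \<in> S \<Longrightarrow> p - s \<in> A"
  shows "concave_on S (\<lambda>s. u (p - s))"
  unfolding concave_on_iff
proof (intro conjI assms(2) ballI allI impI)
  fix s1 s2 a b :: real
  assume s: "s1 \<in> S" "s2 \<in> S" and ab: "0 \<le> a" "0 \<le> b" "a + b = 1"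
  then have "p - (a *\<^sub>R s1 + b *\<^sub>R s2) = a *\<^sub>R (p - s1) + b *\<^sub>R (p - s2)"
    by (simp add: algebra_simps flip: distrib_right)
  then show "a * u (p - s1) + b * u (p - s2) \<le> u (p - (a *\<^sub>R s1 + b *\<^sub>R s2))"
    using assms(1,3) s ab by (auto simp: concave_on_iff)
qed

section \<open>The penalty as a function of the own deviation\<close>

definition penalty_profile :: "real \<Rightarrow> real \<Rightarrow> real \<Rightarrow> real" where
  "penalty_profile a S b = (if b \<le> 0 \<or> S + b \<le> 0 then 0 else (S + b) * b / (a + b))"

definition penalty_profile_deriv :: "real \<Rightarrow> real \<Rightarrow> real \<Rightarrow> real" where
  "penalty_profile_deriv a S b =
     (if b \<le> 0 \<or> S + b \<le> 0 then 0 else 1 - a * (a - S) / (a + b)^2)"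

lemma profile_slope_numerator_le:
  fixes a S b b' :: real
  assumes "0 \<le> a" "S \<le> a" "b > 0" "S + b > 0" "b \<le> b'"
  shows "a * (a - S) \<le> (a + b) * (a + b')"
proof -
  have "a * (a - S) \<le> (a + b) * (a + b)"
    using assms by (intro mult_mono) auto
  also have "\<dots> \<le> (a + b) * (a + b')"
    using assms by (intro mult_left_mono) auto
  finally show ?thesis .
qed

lemma profile_quotient_diff:
  fixes a S b1 b2 :: real
  assumes "a + b1 \<noteq> 0" "a + b2 \<noteq> 0"
  shows "(S + b2) * b2 / (a + b2) - (S + b1) * b1 / (a + b1)
     = (b2 - b1) * (1 - a * (a - S) / ((a + b1) * (a + b2)))"
proof -
  define R where "R = a * (a - S) / ((a + b1) * (a + b2))"
  have "(S + b2) * b2 / (a + b2) = b2 + S - a + a * (a - S) / (a + b2)"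
    using assms by (simp add: field_simps; simp add: algebra_simps)
  moreover have "(S + b1) * b1 / (a + b1) = b1 + S - a + a * (a - S) / (a + b1)"
    using assms by (simp add: field_simps; simp add: algebra_simps)
  moreover have "a * (a - S) / (a + b2) - a * (a - S) / (a + b1) = - ((b2 - b1) * R)"
    unfolding R_def using assms no_zero_divisors[OF assms] by (simp add: field_simps; simp add: algebra_simps)
  ultimately show ?thesis unfolding R_def[symmetric] by (simp add: algebra_simps)
qed

lemma penalty_profile_increment_bounds:
  assumes "0 \<le> a" "S \<le> a" "b1 \<le> b2"
  shows "0 \<le> penalty_profile a S b2 - penalty_profile a S b1"
    and "penalty_profile a S b2 - penalty_profile a S b1 \<le> b2 - b1"
proof -
  have "0 \<le> penalty_profile a S b2 - penalty_profile a S b1 \<and>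
        penalty_profile a S b2 - penalty_profile a S b1 \<le> b2 - b1"
  proof (cases "b2 \<le> 0 \<or> S + b2 \<le> 0")
    case True
    then have "b1 \<le> 0 \<or> S + b1 \<le> 0" using assms by auto
    with True show ?thesis using assms by (simp add: penalty_profile_def)
  next
    case b2: False
    then have quot2: "0 \<le> (S + b2) * b2 / (a + b2)" "(S + b2) * b2 / (a + b2) \<le> b2"
      "(S + b2) * b2 / (a + b2) \<le> S + b2"
      using assms by (auto simp: divide_simps mult_left_mono mult_right_mono)
    show ?thesis
    proof (cases "b1 \<le> 0 \<or> S + b1 \<le> 0")
      case True
      with b2 show ?thesis using quot2 assms
        by (auto simp: penalty_profile_def)
    next
      case b1: False
      have prod_pos: "(a + b1) * (a + b2) > 0" using b1 b2 assms by auto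
      have "a * (a - S) \<le> (a + b1) * (a + b2)"
        using assms b1 by (intro profile_slope_numerator_le) auto
      then have "0 \<le> a * (a - S) / ((a + b1) * (a + b2))"
        and "a * (a - S) / ((a + b1) * (a + b2)) \<le> 1"
        using assms prod_pos by (auto simp: divide_simps)
      moreover have "penalty_profile a S b2 - penalty_profile a S b1
          = (b2 - b1) * (1 - a * (a - S) / ((a + b1) * (a + b2)))"
        using b1 b2 assms profile_quotient_diff[of a b1 b2 S] by (simp add: penalty_profile_def)
      ultimately show ?thesis using assms
        by (auto intro: mult_nonneg_nonneg mult_left_le)
    qed
  qed
  then show "0 \<le> penalty_profile a S b2 - penalty_profile a S b1"
    and "penalty_profile a S b2 - penalty_profile a S b1 \<le> b2 - b1" by auto
qed

lemma penalty_profile_lipschitz: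
  assumes "0 \<le> a" "S \<le> a"
  shows "\<bar>penalty_profile a S b1 - penalty_profile a S b2\<bar> \<le> \<bar>b1 - b2\<bar>"
  using penalty_profile_increment_bounds[OF assms, of b1 b2]
    penalty_profile_increment_bounds[OF assms, of b2 b1]
  by (cases "b1 \<le> b2") auto

lemma penalty_profile_deriv_bounds:
  assumes "0 \<le> a" "S \<le> a"
  shows "0 \<le> penalty_profile_deriv a S b" and "penalty_profile_deriv a S b \<le> 1"
proof -
  have "0 \<le> penalty_profile_deriv a S b \<and> penalty_profile_deriv a S b \<le> 1"
  proof (cases "b \<le> 0 \<or> S + b \<le> 0")
    case True
    then show ?thesis by (simp add: penalty_profile_deriv_def)
  next
    case False
    have "a * (a - S) \<le> (a + b) * (a + b)"
      using assms False by (intro profile_slope_numerator_le) auto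
    moreover have "(a + b)^2 > 0" using False assms by auto
    ultimately show ?thesis
      using assms False by (simp add: penalty_profile_deriv_def divide_simps power2_eq_square)
  qed
  then show "0 \<le> penalty_profile_deriv a S b" and "penalty_profile_deriv a S b \<le> 1" by auto
qed

lemma penalty_profile_deriv_mono:
  assumes "0 \<le> a" "S \<le> a" "b1 \<le> b2"
  shows "penalty_profile_deriv a S b1 \<le> penalty_profile_deriv a S b2"
proof (cases "b1 \<le> 0 \<or> S + b1 \<le> 0")
  case True
  then show ?thesis
    using penalty_profile_deriv_bounds(1)[OF assms(1,2), of b2]
    by (simp add: penalty_profile_deriv_def)
next
  case False
  then have b2: "\<not> (b2 \<le> 0 \<or> S + b2 \<le> 0)" using assms by auto
  have "a * (a - S) / (a + b2)^2 \<le> a * (a - S) / (a + b1)^2"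
    using False assms by (intro divide_left_mono power_mono mult_pos_pos) auto
  then show ?thesis using False b2 by (simp add: penalty_profile_deriv_def)
qed

lemma penalty_profile_branch_eventually:
  fixes b S :: real
  assumes "b \<noteq> 0" "S + b \<noteq> 0"
  shows "\<forall>\<^sub>F y in nhds b. (y \<le> 0 \<or> S + y \<le> 0) \<longleftrightarrow> (b \<le> 0 \<or> S + b \<le> 0)"
proof -
  have "\<forall>\<^sub>F y in nhds b. y \<in> ball b (min \<bar>b\<bar> \<bar>S + b\<bar>)"
    using assms by (intro eventually_nhds_in_open) auto
  then show ?thesis
    by eventually_elim (auto simp: dist_real_def abs_if split: if_splits)
qed

lemma has_real_derivative_penalty_profile:
  assumes "0 \<le> a" "S \<le> a" "b \<noteq> 0" "S + b \<noteq> 0"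
  shows "(penalty_profile a S has_real_derivative penalty_profile_deriv a S b) (at b)"
proof (cases "b \<le> 0 \<or> S + b \<le> 0")
  case True
  have "\<forall>\<^sub>F y in nhds b. penalty_profile a S y = 0"
    using penalty_profile_branch_eventually[OF assms(3,4)]
    by eventually_elim (use True in \<open>auto simp: penalty_profile_def\<close>)
  moreover have "penalty_profile_deriv a S b = 0"
    using True by (simp add: penalty_profile_deriv_def)
  ultimately show ?thesis
    by (subst DERIV_cong_ev[OF refl _ refl, where g = "\<lambda>_. 0"]) auto
next
  case False
  then have ab: "a + b \<noteq> 0" using assms by auto
  have "\<forall>\<^sub>F y in nhds b. penalty_profile a S y = (S + y) * y / (a + y)"
    using penalty_profile_branch_eventually[OF assms(3,4)]
    by eventually_elim (use False in \<open>auto simp: penalty_profile_def\<close>)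
  moreover have "((\<lambda>y. (S + y) * y / (a + y)) has_real_derivative
      ((1 * b + (S + b) * 1) * (a + b) - (S + b) * b * 1) / ((a + b) * (a + b))) (at b)"
    by (rule derivative_eq_intros refl | use ab in simp)+
  moreover have "penalty_profile_deriv a S b = ((a + b) * (a + b) - a * (a - S)) / ((a + b) * (a + b))"
    using False ab by (simp add: penalty_profile_deriv_def power2_eq_square diff_divide_distrib)
  moreover have "(1 * b + (S + b) * 1) * (a + b) - (S + b) * b * 1 = (a + b) * (a + b) - a * (a - S)"
    by (simp add: algebra_simps)
  ultimately show ?thesis
    by (subst DERIV_cong_ev[OF refl _ refl]) auto
qed

lemma isCont_penalty_profile_deriv:
  assumes "0 \<le> a" "S \<le> a" "b \<noteq> 0" "S + b \<noteq> 0"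
  shows "isCont (penalty_profile_deriv a S) b"
proof (cases "b \<le> 0 \<or> S + b \<le> 0")
  case True
  have "\<forall>\<^sub>F y in nhds b. penalty_profile_deriv a S y = 0"
    using penalty_profile_branch_eventually[OF assms(3,4)]
    by eventually_elim (use True in \<open>auto simp: penalty_profile_deriv_def\<close>)
  then show ?thesis by (subst isCont_cong) auto
next
  case False
  have "\<forall>\<^sub>F y in nhds b. penalty_profile_deriv a S y = 1 - a * (a - S) / (a + y)^2"
    using penalty_profile_branch_eventually[OF assms(3,4)]
    by eventually_elim (use False in \<open>auto simp: penalty_profile_deriv_def\<close>)
  moreover have "isCont (\<lambda>y. 1 - a * (a - S) / (a + y)^2) b"
    using False assms by (intro continuous_intros) auto
  ultimately show ?thesis by (subst isCont_cong) auto
qed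

section \<open>The penalty as a function of offers and capacities\<close>

lemma pos_nonneg: "0 \<le> pos z" and le_pos: "z \<le> pos z"
  by (auto simp: pos_def)

lemma upd_nth: "upd y i t $ j = (if j = i then t else y $ j)"
  by (simp add: upd_def)

lemma upd_in_cube: "y \<in> cube Cbar \<Longrightarrow> t \<in> {0..Cbar} \<Longrightarrow> upd y i t \<in> cube Cbar"
  by (auto simp: cube_def upd_nth)

lemma continuous_on_upd: "continuous_on A (\<lambda>y. upd y i t)"
  unfolding upd_def
proof (intro continuous_on_vec_lambda)
  show "continuous_on A (\<lambda>y. if j = i then t else y $ j)" for j
    by (cases "j = i") (auto intro: continuous_intros)
qed

lemma compact_cube: "compact (cube Cbar :: (real^'n) set)"
proof -
  have "cube Cbar = cbox (0::real^'n) (\<chi> j. Cbar)"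
    by (auto simp: cube_def mem_box_cart)
  then show ?thesis by simp
qed

definition deviation_penalty :: "real \<Rightarrow> 'n \<Rightarrow> real^'n \<Rightarrow> real" where
  "deviation_penalty lam i z =
     (if (\<Sum>j\<in>UNIV. pos (z$j)) = 0 then 0
      else lam * pos (\<Sum>j\<in>UNIV. z$j) * pos (z$i) / (\<Sum>j\<in>UNIV. pos (z$j)))"

lemma penalty_eq_deviation_penalty: "penalty lam x c i = deviation_penalty lam i (x - c)"
  by (simp add: penalty_def deviation_penalty_def Let_def sum_subtractf)

lemma deviation_penalty_bounds:
  assumes "0 \<le> lam"
  shows "0 \<le> deviation_penalty lam i z"
    and "deviation_penalty lam i z \<le> lam * (\<Sum>j\<in>UNIV. pos (z$j))"
proof -
  define D where "D = (\<Sum>j\<in>UNIV. pos (z$j))"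
  have "0 \<le> deviation_penalty lam i z \<and> deviation_penalty lam i z \<le> lam * D"
  proof (cases "D = 0")
    case True
    then show ?thesis by (simp add: deviation_penalty_def D_def)
  next
    case False
    then have D_pos: "D > 0"
      unfolding D_def by (metis less_eq_real_def pos_nonneg sum_nonneg)
    have own: "pos (z$i) \<le> D"
      unfolding D_def by (rule member_le_sum) (auto simp: pos_nonneg)
    have "(\<Sum>j\<in>UNIV. z$j) \<le> D"
      unfolding D_def by (intro sum_mono le_pos)
    then have total: "pos (\<Sum>j\<in>UNIV. z$j) \<le> D"
      using D_pos by (simp add: pos_def)
    have "pos (\<Sum>j\<in>UNIV. z$j) * pos (z$i) / D \<le> D * D / D"
      using own total D_pos by (intro divide_right_mono mult_mono) (auto simp: pos_nonneg)
    then have "pos (\<Sum>j\<in>UNIV. z$j) * pos (z$i) / D \<le> D"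
      using D_pos by simp
    then have "lam * (pos (\<Sum>j\<in>UNIV. z$j) * pos (z$i) / D) \<le> lam * D"
      using assms by (rule mult_left_mono)
    moreover have "0 \<le> lam * (pos (\<Sum>j\<in>UNIV. z$j) * pos (z$i) / D)"
      using assms D_pos by (simp add: pos_nonneg)
    ultimately show ?thesis
      using False by (simp add: deviation_penalty_def D_def[symmetric])
  qed
  then show "0 \<le> deviation_penalty lam i z"
    and "deviation_penalty lam i z \<le> lam * (\<Sum>j\<in>UNIV. pos (z$j))"
    by (auto simp: D_def)
qed

text \<open>At a point where every deviation is nonpositive the penalty is squeezed to 0 by the
  bound above; elsewhere the denominator is positive nearby.\<close>
lemma continuous_deviation_penalty:
  fixes i :: "'n::finite"
  assumes "0 \<le> lam"
  shows "continuous_on UNIV (deviation_penalty lam i)"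
proof -
  define D where "D = (\<lambda>z::real^'n. \<Sum>j\<in>UNIV. pos (z$j))"
  have D_cont: "continuous_on UNIV D"
    unfolding D_def pos_def by (intro continuous_intros)
  have "isCont (deviation_penalty lam i) z" for z
  proof (cases "D z = 0")
    case True
    have "(deviation_penalty lam i \<longlongrightarrow> 0) (at z)"
    proof (rule Lim_null_comparison)
      show "\<forall>\<^sub>F y in at z. norm (deviation_penalty lam i y) \<le> lam * D y"
        by (intro always_eventually allI)
          (simp add: D_def abs_of_nonneg deviation_penalty_bounds[OF assms])
      have "((\<lambda>y. lam * D y) \<longlongrightarrow> lam * D z) (at z)"
        using D_cont by (intro tendsto_intros) (simp add: continuous_on_def)
      then show "((\<lambda>y. lam * D y) \<longlongrightarrow> 0) (at z)" using True by simp
    qed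
    moreover have "deviation_penalty lam i z = 0"
      using True by (simp add: deviation_penalty_def D_def)
    ultimately show ?thesis by (simp add: isCont_def)
  next
    case False
    then have "D z > 0"
      unfolding D_def by (metis less_eq_real_def pos_nonneg sum_nonneg)
    then have "\<forall>\<^sub>F y in nhds z. y \<in> {y. 0 < D y}"
      using D_cont by (intro eventually_nhds_in_open) (auto intro!: open_Collect_less continuous_intros)
    then have "\<forall>\<^sub>F y in nhds z.
        deviation_penalty lam i y = lam * pos (\<Sum>j\<in>UNIV. y$j) * pos (y$i) / D y"
      by eventually_elim (auto simp: deviation_penalty_def D_def)
    moreover have "isCont (\<lambda>y. lam * pos (\<Sum>j\<in>UNIV. y$j) * pos (y$i) / D y) z"
      using \<open>D z > 0\<close> D_cont unfolding pos_def
      by (intro continuous_intros) (auto simp: continuous_on_eq_continuous_at)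
    ultimately show ?thesis by (subst isCont_cong) auto
  qed
  then show ?thesis by (simp add: continuous_at_imp_continuous_on)
qed

lemma continuous_on_penalty_compose:
  assumes "0 \<le> lam" "continuous_on A h" "continuous_on A k"
  shows "continuous_on A (\<lambda>z. penalty lam (h z) (k z) i)"
  unfolding penalty_eq_deviation_penalty
  by (rule continuous_on_compose2[OF continuous_deviation_penalty[OF assms(1)]])
    (use assms(2,3) in \<open>auto intro: continuous_intros\<close>)

lemma borel_measurable_penalty:
  assumes "0 \<le> lam"
  shows "(\<lambda>c. penalty lam x c i) \<in> borel_measurable lborel"
  by (intro borel_measurable_lborel_continuous continuous_on_penalty_compose[OF assms])
    (auto intro: continuous_intros)

lemma penalty_bounded_on_cube:
  fixes y c :: "real^'n"
  assumes "0 \<le> lam" "y \<in> cube Cbar" "c \<in> cube Cbar"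
  shows "\<bar>penalty lam y c i\<bar> \<le> lam * CARD('n) * Cbar"
proof -
  have "pos ((y - c)$j) \<le> Cbar" for j
  proof -
    have "0 \<le> c$j" "0 \<le> y$j" "y$j \<le> Cbar" using assms(2,3) by (auto simp: cube_def)
    then show ?thesis by (simp add: pos_def max_def)
  qed
  then have "(\<Sum>j\<in>UNIV. pos ((y - c)$j)) \<le> CARD('n) * Cbar"
    using sum_mono[of UNIV "\<lambda>j. pos ((y - c)$j)" "\<lambda>_. Cbar"] by simp
  then have "lam * (\<Sum>j\<in>UNIV. pos ((y - c)$j)) \<le> lam * (CARD('n) * Cbar)"
    using assms(1) by (rule mult_left_mono)
  then show ?thesis
    using deviation_penalty_bounds[OF assms(1), of i "y - c"]
    by (simp add: penalty_eq_deviation_penalty mult.assoc)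
qed

definition other_excess :: "real^'n \<Rightarrow> real^'n \<Rightarrow> 'n \<Rightarrow> real" where
  "other_excess x c i = (\<Sum>j\<in>UNIV-{i}. pos (x$j - c$j))"

definition other_imbalance :: "real^'n \<Rightarrow> real^'n \<Rightarrow> 'n \<Rightarrow> real" where
  "other_imbalance x c i = (\<Sum>j\<in>UNIV-{i}. x$j - c$j)"

lemma other_excess_nonneg: "0 \<le> other_excess x c i"
  by (simp add: other_excess_def sum_nonneg pos_nonneg)

lemma other_imbalance_le_excess: "other_imbalance x c i \<le> other_excess x c i"
  unfolding other_excess_def other_imbalance_def by (intro sum_mono le_pos)

lemma other_imbalance_add_own:
  "other_imbalance x c i + (t - c$i) = (\<Sum>j\<in>UNIV. upd x i t $ j) - (\<Sum>j\<in>UNIV. c $ j)"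
proof -
  have "(\<Sum>j\<in>UNIV. upd x i t $ j) = t + (\<Sum>j\<in>UNIV-{i}. x $ j)"
    by (subst sum.remove[of UNIV i]) (auto simp: upd_nth intro!: sum.cong)
  moreover have "(\<Sum>j\<in>UNIV. c $ j) = c$i + (\<Sum>j\<in>UNIV-{i}. c $ j)"
    by (subst sum.remove[of UNIV i]) auto
  ultimately show ?thesis
    by (simp add: other_imbalance_def sum_subtractf)
qed

lemma penalty_upd_eq_profile:
  "penalty lam (upd x i s) c i =
     lam * penalty_profile (other_excess x c i) (other_imbalance x c i) (s - c$i)"
proof -
  define a S b where "a = other_excess x c i" and "S = other_imbalance x c i"
    and "b = s - c$i"
  have excess: "(\<Sum>j\<in>UNIV. pos ((upd x i s - c)$j)) = pos b + a"
    unfolding a_def b_def other_excess_def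
    by (subst sum.remove[of UNIV i]) (auto simp: upd_nth intro!: sum.cong)
  have total: "(\<Sum>j\<in>UNIV. (upd x i s - c)$j) = S + b"
    using other_imbalance_add_own[of x c i s] by (simp add: S_def b_def sum_subtractf)
  have own: "(upd x i s - c)$i = b"
    by (simp add: upd_nth b_def)
  have "0 \<le> a" unfolding a_def by (rule other_excess_nonneg)
  then have "deviation_penalty lam i (upd x i s - c) = lam * penalty_profile a S b"
    unfolding deviation_penalty_def excess total own
    by (cases "b \<le> 0"; cases "S + b \<le> 0") (auto simp: penalty_profile_def pos_def ac_simps)
  then show ?thesis
    by (simp add: penalty_eq_deviation_penalty a_def S_def b_def)
qed

lemma penalty_upd_difference_quotient_bound:
  assumes "0 \<le> lam" "h \<noteq> 0"
  shows "\<bar>(penalty lam (upd x i (t + h)) c i - penalty lam (upd x i t) c i) / h\<bar> \<le> lam"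
proof -
  have "\<bar>penalty_profile (other_excess x c i) (other_imbalance x c i) (t + h - c$i)
       - penalty_profile (other_excess x c i) (other_imbalance x c i) (t - c$i)\<bar> \<le> \<bar>h\<bar>"
    using penalty_profile_lipschitz[OF other_excess_nonneg[of x c i] other_imbalance_le_excess,
        of "t + h - c$i" "t - c$i"] by simp
  then show ?thesis
    using assms
    by (simp add: penalty_upd_eq_profile abs_mult right_diff_distrib[symmetric] divide_simps
        mult_left_mono)
qed

lemma penalty_upd_has_derivative:
  assumes "t - c$i \<noteq> 0" "other_imbalance x c i + (t - c$i) \<noteq> 0"
  shows "((\<lambda>s. penalty lam (upd x i s) c i) has_real_derivative
     lam * penalty_profile_deriv (other_excess x c i) (other_imbalance x c i) (t - c$i)) (at t)"
proof -
  have "((\<lambda>s. penalty_profile (other_excess x c i) (other_imbalance x c i) (s - c$i))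
      has_real_derivative
      penalty_profile_deriv (other_excess x c i) (other_imbalance x c i) (t - c$i) * 1) (at t)"
    by (rule DERIV_chain2[OF has_real_derivative_penalty_profile])
      (use assms in \<open>auto intro!: derivative_eq_intros other_excess_nonneg
         other_imbalance_le_excess\<close>)
  then show ?thesis
    unfolding penalty_upd_eq_profile by (auto intro: DERIV_cmult)
qed

lemma AE_penalty_upd_differentiable:
  fixes x :: "real^'n"
  shows "AE c in lborel. t - c$i \<noteq> 0 \<and> other_imbalance x c i + (t - c$i) \<noteq> 0"
proof -
  have own: "axis i (1::real) \<bullet> c = c$i" and total: "(\<chi> j. (1::real)) \<bullet> c = (\<Sum>j\<in>UNIV. c$j)"
    for c :: "real^'n"
    by (simp add: inner_axis') (simp add: inner_vec_def)
  have "AE c in lborel. axis i (1::real) \<bullet> c \<noteq> t"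
    by (rule AE_lborel_not_hyperplane) (simp add: axis_eq_0_iff)
  moreover have "AE c in lborel. (\<chi> j. (1::real)) \<bullet> c \<noteq> (\<Sum>j\<in>UNIV. upd x i t $ j)"
    by (rule AE_lborel_not_hyperplane) (simp add: vec_eq_iff)
  ultimately show ?thesis
    by eventually_elim (auto simp: own total other_imbalance_add_own)
qed

lemma borel_measurable_penalty_profile_deriv:
  "(\<lambda>c. penalty_profile_deriv (other_excess x c i) (other_imbalance x c i) (t - c$i))
     \<in> borel_measurable lborel"
  unfolding penalty_profile_deriv_def other_excess_def other_imbalance_def pos_def
  by measurable

lemma abs_scaled_penalty_profile_deriv_le:
  assumes "0 \<le> lam"
  shows "\<bar>lam * penalty_profile_deriv (other_excess x c i) (other_imbalance x c i) b\<bar> \<le> lam"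
proof -
  have "0 \<le> penalty_profile_deriv (other_excess x c i) (other_imbalance x c i) b"
    and "penalty_profile_deriv (other_excess x c i) (other_imbalance x c i) b \<le> 1"
    using penalty_profile_deriv_bounds[OF other_excess_nonneg other_imbalance_le_excess] .
  then show ?thesis
    using assms by (simp add: abs_mult mult_left_le)
qed

definition exp_penalty_slope :: "(real^'n \<Rightarrow> real) \<Rightarrow> real \<Rightarrow> real^'n \<Rightarrow> 'n \<Rightarrow> real \<Rightarrow> real"
  where "exp_penalty_slope f lam x i t =
     expect f (\<lambda>c. lam * penalty_profile_deriv (other_excess x c i) (other_imbalance x c i) (t - c$i))"

section \<open>Expectations under a density on the cube\<close>

locale capacity_density =
  fixes f :: "real^'n \<Rightarrow> real" and Cbar :: real
  assumes smooth_full_support: "smooth_full_support f Cbar"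
begin

lemma density_measurable: "f \<in> borel_measurable lborel"
  and density_nonneg: "0 \<le> f c"
  and density_outside_cube: "c \<notin> cube Cbar \<Longrightarrow> f c = 0"
  and integrable_density: "integrable lborel f"
  using smooth_full_support by (auto simp: smooth_full_support_def)

lemma norm_mult_density_le:
  assumes "c \<in> cube Cbar \<Longrightarrow> \<bar>g c\<bar> \<le> B"
  shows "norm (g c * f c) \<le> B * f c"
proof (cases "c \<in> cube Cbar")
  case True
  then have "\<bar>g c\<bar> * f c \<le> B * f c"
    using assms density_nonneg by (intro mult_right_mono) auto
  then show ?thesis using density_nonneg by (simp add: abs_mult)
next
  case False
  then show ?thesis by (simp add: density_outside_cube)
qed

lemma integrable_bounded_on_cube:
  assumes "g \<in> borel_measurable lborel" "\<And>c. c \<in> cube Cbar \<Longrightarrow> \<bar>g c\<bar> \<le> B"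
  shows "integrable lborel (\<lambda>c. g c * f c)"
proof (rule Bochner_Integration.integrable_bound)
  show "integrable lborel (\<lambda>c. B * f c)"
    using integrable_density by simp
  show "(\<lambda>c. g c * f c) \<in> borel_measurable lborel"
    using assms(1) density_measurable by measurable
  show "AE c in lborel. norm (g c * f c) \<le> norm (B * f c)"
    using norm_mult_density_le[OF assms(2)] by (auto intro!: AE_I2 order_trans[OF _ abs_ge_self])
qed

lemma integrable_continuous:
  assumes "continuous_on UNIV g"
  shows "integrable lborel (\<lambda>c. g c * f c)"
proof -
  have "compact (g ` cube Cbar)"
    using assms by (intro compact_continuous_image compact_cube) (auto intro: continuous_on_subset)
  then obtain B where "\<forall>c\<in>cube Cbar. \<bar>g c\<bar> \<le> B"
    by (auto dest!: compact_imp_bounded simp: bounded_iff)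
  then show ?thesis
    using assms by (intro integrable_bounded_on_cube borel_measurable_lborel_continuous) auto
qed

lemma expect_diff:
  assumes "integrable lborel (\<lambda>c. g c * f c)" "integrable lborel (\<lambda>c. h c * f c)"
  shows "expect f (\<lambda>c. g c - h c) = expect f g - expect f h"
  unfolding expect_def using assms by (simp add: left_diff_distrib)

lemma continuous_on_expect:
  fixes k :: "'a::metric_space \<Rightarrow> real^'n \<Rightarrow> real"
  assumes meas: "\<And>y. y \<in> S \<Longrightarrow> k y \<in> borel_measurable lborel"
    and cont: "\<And>y. y \<in> S \<Longrightarrow>
      AE c in lborel. c \<in> cube Cbar \<longrightarrow> continuous (at y within S) (\<lambda>y. k y c)"
    and bound: "\<And>y c. y \<in> S \<Longrightarrow> c \<in> cube Cbar \<Longrightarrow> \<bar>k y c\<bar> \<le> B"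
  shows "continuous_on S (\<lambda>y. expect f (k y))"
  unfolding continuous_on_sequentially
proof (intro allI ballI impI)
  fix X y assume y: "y \<in> S" and X: "(\<forall>n. X n \<in> S) \<and> X \<longlonglongrightarrow> y"
  show "((\<lambda>y. expect f (k y)) \<circ> X) \<longlonglongrightarrow> expect f (k y)"
    unfolding comp_def expect_def
  proof (rule integral_dominated_convergence[where w = "\<lambda>c. B * f c"])
    show "(\<lambda>c. k y c * f c) \<in> borel_measurable lborel"
      using meas[OF y] density_measurable by measurable
    show "(\<lambda>c. k (X n) c * f c) \<in> borel_measurable lborel" for n
    proof -
      have "k (X n) \<in> borel_measurable lborel" using X by (intro meas) auto
      then show ?thesis using density_measurable by measurable
    qed
    show "integrable lborel (\<lambda>c. B * f c)"
      using integrable_density by simp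
    show "AE c in lborel. (\<lambda>n. k (X n) c * f c) \<longlonglongrightarrow> k y c * f c"
      using cont[OF y]
    proof eventually_elim
      case (elim c)
      show ?case
      proof (cases "c \<in> cube Cbar")
        case True
        have "(\<lambda>n. k (X n) c) \<longlonglongrightarrow> k y c"
          by (rule continuous_within_tendsto_compose[where S = S]) (use elim True X in auto)
        then show ?thesis by (intro tendsto_intros)
      next
        case False
        then show ?thesis by (simp add: density_outside_cube)
      qed
    qed
    show "AE c in lborel. norm (k (X n) c * f c) \<le> B * f c" for n
      using X by (intro AE_I2 norm_mult_density_le bound) auto
  qed
qed

lemma has_real_derivative_expect:
  assumes int: "\<And>s. integrable lborel (\<lambda>c. k s c * f c)"
    and meas: "\<And>s. k s \<in> borel_measurable lborel"
    and meas': "k' \<in> borel_measurable lborel"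
    and deriv: "AE c in lborel. ((\<lambda>s. k s c) has_real_derivative k' c) (at t)"
    and quot_bound: "\<And>c h. c \<in> cube Cbar \<Longrightarrow> h \<noteq> 0 \<Longrightarrow> \<bar>(k (t + h) c - k t c) / h\<bar> \<le> B"
  shows "((\<lambda>s. expect f (k s)) has_real_derivative expect f k') (at t)"
  unfolding DERIV_def tendsto_at_iff_sequentially comp_def
proof (intro allI impI)
  fix X :: "nat \<Rightarrow> real" assume X0: "\<forall>n. X n \<in> UNIV - {0}" and X: "X \<longlonglongrightarrow> 0"
  have quot_eq: "(expect f (k (t + X n)) - expect f (k t)) / X n
      = integral\<^sup>L lborel (\<lambda>c. (k (t + X n) c - k t c) / X n * f c)" for n
  proof -
    have "(expect f (k (t + X n)) - expect f (k t)) / X n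
        = integral\<^sup>L lborel (\<lambda>c. (k (t + X n) c * f c - k t c * f c) / X n)"
      unfolding expect_def using int by simp
    also have "\<dots> = integral\<^sup>L lborel (\<lambda>c. (k (t + X n) c - k t c) / X n * f c)"
      by (simp add: left_diff_distrib)
    finally show ?thesis .
  qed
  show "(\<lambda>n. (expect f (k (t + X n)) - expect f (k t)) / X n) \<longlonglongrightarrow> expect f k'"
    unfolding quot_eq unfolding expect_def
  proof (rule integral_dominated_convergence[where w = "\<lambda>c. B * f c"])
    show "(\<lambda>c. k' c * f c) \<in> borel_measurable lborel"
      using meas' density_measurable by measurable
    show "(\<lambda>c. (k (t + X n) c - k t c) / X n * f c) \<in> borel_measurable lborel" for n
      using meas[of "t + X n"] meas[of t] density_measurable by measurable
    show "integrable lborel (\<lambda>c. B * f c)"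
      using integrable_density by simp
    show "AE c in lborel. (\<lambda>n. (k (t + X n) c - k t c) / X n * f c) \<longlonglongrightarrow> k' c * f c"
      using deriv
    proof eventually_elim
      case (elim c)
      then have "((\<lambda>h. (k (t + h) c - k t c) / h) \<longlongrightarrow> k' c) (at 0)"
        by (simp add: DERIV_def)
      then have "(\<lambda>n. (k (t + X n) c - k t c) / X n) \<longlonglongrightarrow> k' c"
        using X0 X unfolding tendsto_at_iff_sequentially comp_def by blast
      then show ?case by (intro tendsto_intros)
    qed
    show "AE c in lborel. norm ((k (t + X n) c - k t c) / X n * f c) \<le> B * f c" for n
      using X0 by (intro AE_I2 norm_mult_density_le quot_bound) auto
  qed
qed

lemma concave_on_expect:
  assumes I: "convex I"
    and int: "\<And>s. s \<in> I \<Longrightarrow> integrable lborel (\<lambda>c. k s c * f c)"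
    and conc: "\<And>c. c \<in> cube Cbar \<Longrightarrow> concave_on I (\<lambda>s. k s c)"
  shows "concave_on I (\<lambda>s. expect f (k s))"
  unfolding concave_on_iff
proof (intro conjI I ballI allI impI)
  fix s1 s2 and a b :: real
  assume s: "s1 \<in> I" "s2 \<in> I" and ab: "0 \<le> a" "0 \<le> b" "a + b = 1"
  have "a * expect f (k s1) + b * expect f (k s2)
      = integral\<^sup>L lborel (\<lambda>c. a * (k s1 c * f c) + b * (k s2 c * f c))"
    unfolding expect_def using int s by (subst Bochner_Integration.integral_add) auto
  also have "\<dots> \<le> expect f (k (a *\<^sub>R s1 + b *\<^sub>R s2))"
    unfolding expect_def
  proof (rule integral_mono)
    show "integrable lborel (\<lambda>c. a * (k s1 c * f c) + b * (k s2 c * f c))"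
      using int s by auto
    show "integrable lborel (\<lambda>c. k (a *\<^sub>R s1 + b *\<^sub>R s2) c * f c)"
      using I s ab by (intro int) (simp add: convex_def)
    fix c
    show "a * (k s1 c * f c) + b * (k s2 c * f c) \<le> k (a *\<^sub>R s1 + b *\<^sub>R s2) c * f c"
    proof (cases "c \<in> cube Cbar")
      case True
      then have "a * k s1 c + b * k s2 c \<le> k (a *\<^sub>R s1 + b *\<^sub>R s2) c"
        using conc s ab by (auto simp: concave_on_iff)
      then have "(a * k s1 c + b * k s2 c) * f c \<le> k (a *\<^sub>R s1 + b *\<^sub>R s2) c * f c"
        using density_nonneg by (rule mult_right_mono)
      then show ?thesis by (simp add: algebra_simps)
    next
      case False
      then show ?thesis by (simp add: density_outside_cube)
    qed
  qed
  finally show "a * expect f (k s1) + b * expect f (k s2) \<le> expect f (k (a *\<^sub>R s1 + b *\<^sub>R s2))" .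
qed

lemma integrable_penalty:
  "0 \<le> lam \<Longrightarrow> integrable lborel (\<lambda>c. penalty lam y c i * f c)"
  by (intro integrable_continuous continuous_on_penalty_compose) (auto intro: continuous_intros)

lemma integrable_scaled_penalty_profile_deriv:
  assumes "0 \<le> lam"
  shows "integrable lborel (\<lambda>c.
     lam * penalty_profile_deriv (other_excess x c i) (other_imbalance x c i) (t - c$i) * f c)"
proof (rule integrable_bounded_on_cube[where B = lam])
  show "(\<lambda>c. lam * penalty_profile_deriv (other_excess x c i) (other_imbalance x c i) (t - c$i))
      \<in> borel_measurable lborel"
    using borel_measurable_penalty_profile_deriv by measurable
qed (rule abs_scaled_penalty_profile_deriv_le[OF assms])

lemma has_real_derivative_exp_penalty:
  assumes "0 \<le> lam"
  shows "((\<lambda>s. exp_penalty f lam (upd x i s) i) has_real_derivative exp_penalty_slope f lam x i t)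
    (at t)"
  unfolding exp_penalty_def exp_penalty_slope_def
proof (rule has_real_derivative_expect)
  show "integrable lborel (\<lambda>c. penalty lam (upd x i s) c i * f c)" for s
    using integrable_penalty[OF assms] .
  show "(\<lambda>c. penalty lam (upd x i s) c i) \<in> borel_measurable lborel" for s
    using borel_measurable_penalty[OF assms] .
  show "(\<lambda>c. lam * penalty_profile_deriv (other_excess x c i) (other_imbalance x c i) (t - c$i))
      \<in> borel_measurable lborel"
    using borel_measurable_penalty_profile_deriv by measurable
  show "AE c in lborel. ((\<lambda>s. penalty lam (upd x i s) c i) has_real_derivative
      lam * penalty_profile_deriv (other_excess x c i) (other_imbalance x c i) (t - c$i)) (at t)"
    using AE_penalty_upd_differentiable[of t i x]
    by eventually_elim (simp add: penalty_upd_has_derivative)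
  show "\<bar>(penalty lam (upd x i (t + h)) c i - penalty lam (upd x i t) c i) / h\<bar> \<le> lam"
    if "h \<noteq> 0" for c h
    using penalty_upd_difference_quotient_bound[OF assms that] .
qed

lemma continuous_exp_penalty_slope:
  assumes "0 \<le> lam"
  shows "continuous_on UNIV (exp_penalty_slope f lam x i)"
  unfolding exp_penalty_slope_def
proof (rule continuous_on_expect[where B = lam])
  show "(\<lambda>c. lam * penalty_profile_deriv (other_excess x c i) (other_imbalance x c i) (t - c$i))
      \<in> borel_measurable lborel" for t
    using borel_measurable_penalty_profile_deriv by measurable
  show "\<bar>lam * penalty_profile_deriv (other_excess x c i) (other_imbalance x c i) (t - c$i)\<bar> \<le> lam"
    for t c
    using abs_scaled_penalty_profile_deriv_le[OF assms] .
  show "AE c in lborel. c \<in> cube Cbar \<longrightarrow> continuous (at t within UNIV)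
      (\<lambda>t. lam * penalty_profile_deriv (other_excess x c i) (other_imbalance x c i) (t - c$i))"
    for t
    using AE_penalty_upd_differentiable[of t i x]
  proof eventually_elim
    case (elim c)
    have "isCont (penalty_profile_deriv (other_excess x c i) (other_imbalance x c i)) (t - c$i)"
      using elim by (intro isCont_penalty_profile_deriv other_excess_nonneg other_imbalance_le_excess)
        auto
    then have "isCont (\<lambda>t. penalty_profile_deriv (other_excess x c i) (other_imbalance x c i)
        (t - c$i)) t"
      by (rule isCont_o2[rotated]) (intro continuous_intros)
    then show ?case by (auto intro: continuous_intros)
  qed
qed

lemma exp_penalty_slope_mono:
  assumes "0 \<le> lam" "t1 \<le> t2"
  shows "exp_penalty_slope f lam x i t1 \<le> exp_penalty_slope f lam x i t2"
  unfolding exp_penalty_slope_def expect_def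
proof (rule integral_mono[OF integrable_scaled_penalty_profile_deriv[OF assms(1)]
      integrable_scaled_penalty_profile_deriv[OF assms(1)]])
  fix c
  have "penalty_profile_deriv (other_excess x c i) (other_imbalance x c i) (t1 - c$i)
      \<le> penalty_profile_deriv (other_excess x c i) (other_imbalance x c i) (t2 - c$i)"
    using assms(2) by (intro penalty_profile_deriv_mono other_excess_nonneg other_imbalance_le_excess)
      auto
  then show "lam * penalty_profile_deriv (other_excess x c i) (other_imbalance x c i) (t1 - c$i) * f c
      \<le> lam * penalty_profile_deriv (other_excess x c i) (other_imbalance x c i) (t2 - c$i) * f c"
    using assms(1) density_nonneg by (intro mult_right_mono mult_left_mono) auto
qed

lemma convex_on_exp_penalty:
  "0 \<le> lam \<Longrightarrow> convex_on UNIV (\<lambda>s. exp_penalty f lam (upd x i s) i)"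
  by (rule convex_on_realI[where f' = "exp_penalty_slope f lam x i"])
    (auto intro: has_real_derivative_exp_penalty exp_penalty_slope_mono)

lemma continuous_on_exp_penalty_others:
  assumes "0 \<le> lam" "t \<in> {0..Cbar}"
  shows "continuous_on (cube Cbar) (\<lambda>y. exp_penalty f lam (upd y i t) i)"
  unfolding exp_penalty_def
proof (rule continuous_on_expect[where B = "lam * CARD('n) * Cbar"])
  show "(\<lambda>c. penalty lam (upd y i t) c i) \<in> borel_measurable lborel" for y
    using borel_measurable_penalty[OF assms(1)] .
  show "\<bar>penalty lam (upd y i t) c i\<bar> \<le> lam * CARD('n) * Cbar"
    if "y \<in> cube Cbar" "c \<in> cube Cbar" for y c
    using penalty_bounded_on_cube[OF assms(1) upd_in_cube[OF that(1) assms(2)] that(2)] .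
  show "AE c in lborel. c \<in> cube Cbar \<longrightarrow>
      continuous (at y within cube Cbar) (\<lambda>y. penalty lam (upd y i t) c i)" for y
  proof (intro AE_I2 impI)
    fix c :: "real^'n"
    have "continuous_on UNIV (\<lambda>y. penalty lam (upd y i t) c i)"
      using assms(1) continuous_on_upd by (rule continuous_on_penalty_compose) simp
    then show "continuous (at y within cube Cbar) (\<lambda>y. penalty lam (upd y i t) c i)"
      by (simp add: continuous_on_eq_continuous_at continuous_at_imp_continuous_within)
  qed
qed

text \<open>The utility u is only known on (0, \<infinity>).  Inside the cube its argument d0 + c_i - x_i
  stays above d0 - Cbar > 0, so it may be truncated there, which makes the integrand
  continuous on the whole space.\<close>
lemma payoff_eq_truncated_utility:
  assumes "y$i \<in> {0..Cbar}"
  shows "payoff f lam u d0 rho y i =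
    rho * y$i + expect f (\<lambda>c. u (max (d0 + c$i - y$i) (d0 - Cbar)) - penalty lam y c i)"
  unfolding payoff_def expect_def
proof (intro arg_cong[where f = "\<lambda>z. rho * y$i + z"] Bochner_Integration.integral_cong refl)
  fix c :: "real^'n"
  show "(u (d0 + c$i - y$i) - penalty lam y c i) * f c
      = (u (max (d0 + c$i - y$i) (d0 - Cbar)) - penalty lam y c i) * f c"
  proof (cases "c \<in> cube Cbar")
    case True
    then have "0 \<le> c$i" by (simp add: cube_def)
    then have "d0 - Cbar \<le> d0 + c$i - y$i" using assms by simp
    then show ?thesis by (simp add: max_absorb1)
  next
    case False
    then show ?thesis by (simp add: density_outside_cube)
  qed
qed

lemma continuous_on_payoff:
  assumes lam: "0 \<le> lam" and u: "continuous_on {0<..} u" and d0: "Cbar < d0"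
  shows "continuous_on (cube Cbar) (\<lambda>y. payoff f lam u d0 rho y i)"
proof -
  define v where "v r = u (max r (d0 - Cbar))" for r
  have v_cont: "continuous_on UNIV v"
    unfolding v_def using u by (rule continuous_on_truncated_below) (use d0 in simp)
  define k where "k y c = v (d0 + c$i - y$i) - penalty lam y c i" for y c :: "real^'n"
  have k_cont_capacity: "continuous_on UNIV (k y)" for y
    unfolding k_def by (intro continuous_on_diff continuous_on_compose2[OF v_cont]
        continuous_on_penalty_compose[OF lam]) (auto intro!: continuous_intros)
  have k_cont_offer: "continuous_on UNIV (\<lambda>y. k y c)" for c
    unfolding k_def by (intro continuous_on_diff continuous_on_compose2[OF v_cont]
        continuous_on_penalty_compose[OF lam]) (auto intro!: continuous_intros)
  have "compact (v ` {d0 - Cbar..d0 + Cbar})"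
    using v_cont by (intro compact_continuous_image) (auto intro: continuous_on_subset)
  then obtain Bv where Bv: "\<forall>r\<in>{d0 - Cbar..d0 + Cbar}. \<bar>v r\<bar> \<le> Bv"
    by (auto dest!: compact_imp_bounded simp: bounded_iff)
  have k_bound: "\<bar>k y c\<bar> \<le> Bv + lam * CARD('n) * Cbar"
    if "y \<in> cube Cbar" "c \<in> cube Cbar" for y c
  proof -
    have "0 \<le> y$i" "y$i \<le> Cbar" "0 \<le> c$i" "c$i \<le> Cbar"
      using that by (auto simp: cube_def)
    then have "\<bar>v (d0 + c$i - y$i)\<bar> \<le> Bv"
      using Bv by simp
    then show ?thesis
      using penalty_bounded_on_cube[OF lam that, of i] abs_triangle_ineq4[of "v (d0 + c$i - y$i)"]
      unfolding k_def by linarith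
  qed
  have "continuous_on (cube Cbar) (\<lambda>y. expect f (k y))"
  proof (rule continuous_on_expect[OF borel_measurable_lborel_continuous[OF k_cont_capacity] _ k_bound])
    show "AE c in lborel. c \<in> cube Cbar \<longrightarrow> continuous (at y within cube Cbar) (\<lambda>y. k y c)" for y
    proof (intro AE_I2 impI)
      fix c
      show "continuous (at y within cube Cbar) (\<lambda>y. k y c)"
        using k_cont_offer[of c]
        by (simp add: continuous_on_eq_continuous_at continuous_at_imp_continuous_within)
    qed
  qed
  then have "continuous_on (cube Cbar) (\<lambda>y. rho * y$i + expect f (k y))"
    by (intro continuous_intros)
  then show ?thesis
    by (rule continuous_on_eq) (simp add: payoff_eq_truncated_utility k_def[abs_def] v_def cube_def)
qed

lemma concave_on_payoff:
  assumes lam: "0 \<le> lam" and u: "continuous_on {0<..} u" "concave_on {0<..} u"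
    and d0: "Cbar < d0"
  shows "concave_on {0..Cbar} (\<lambda>s. payoff f lam u d0 rho (upd x i s) i)"
proof -
  define v where "v r = u (max r (d0 - Cbar))" for r
  have v_cont: "continuous_on UNIV v"
    unfolding v_def using u(1) by (rule continuous_on_truncated_below) (use d0 in simp)
  have int_v: "integrable lborel (\<lambda>c. v (d0 + c$i - s) * f c)" for s
    by (intro integrable_continuous continuous_on_compose2[OF v_cont]) (auto intro!: continuous_intros)
  have "concave_on {0..Cbar} (\<lambda>s. expect f (\<lambda>c. v (d0 + c$i - s)))"
  proof (rule concave_on_expect[OF convex_real_interval(5) int_v])
    fix c :: "real^'n"
    assume "c \<in> cube Cbar"
    then have "0 \<le> c$i" by (simp add: cube_def)
    then have "concave_on {0..Cbar} (\<lambda>s. u (d0 + c$i - s))"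
      using d0 by (intro concave_on_reflect[OF u(2)]) auto
    then show "concave_on {0..Cbar} (\<lambda>s. v (d0 + c$i - s))"
      by (rule concave_on_cong_on) (use \<open>0 \<le> c$i\<close> in \<open>simp add: v_def max_absorb1\<close>)
  qed
  moreover have "convex_on {0..Cbar} (\<lambda>s. exp_penalty f lam (upd x i s) i)"
    by (rule convex_on_subset[OF convex_on_exp_penalty[OF lam]]) auto
  ultimately have "concave_on {0..Cbar}
      (\<lambda>s. rho * s + expect f (\<lambda>c. v (d0 + c$i - s)) - exp_penalty f lam (upd x i s) i)"
    by (intro concave_on_diff concave_on_add) (auto simp: concave_on_iff algebra_simps)
  then show ?thesis
  proof (rule concave_on_cong_on)
    fix s assume "s \<in> {0..Cbar}"
    then have "payoff f lam u d0 rho (upd x i s) i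
        = rho * s + expect f (\<lambda>c. v (d0 + c$i - s) - penalty lam (upd x i s) c i)"
      by (simp add: payoff_eq_truncated_utility upd_nth v_def)
    also have "\<dots> = rho * s + expect f (\<lambda>c. v (d0 + c$i - s)) - exp_penalty f lam (upd x i s) i"
      by (simp add: expect_diff[OF int_v integrable_penalty[OF lam]] exp_penalty_def)
    finally show "rho * s + expect f (\<lambda>c. v (d0 + c$i - s)) - exp_penalty f lam (upd x i s) i
        = payoff f lam u d0 rho (upd x i s) i" by simp
  qed
qed

end

theorem mainTheorem2:
  fixes f :: "(real^'n) \<Rightarrow> real" and Cbar lam rho d0 :: real and u :: "real \<Rightarrow> real"
  assumes F: "smooth_full_support f Cbar"
    and lam: "lam > 0" and rho: "rho \<ge> 0" and d0: "d0 > Cbar"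
    and u_C1: "\<exists>u'. continuous_on {0<..} u' \<and>
                    (\<forall>t\<in>{0<..}. (u has_real_derivative u' t) (at t))"
    and u_nonneg: "\<forall>t\<in>{0<..}. u t \<ge> 0"
    and u_concave: "concave_on {0<..} u"
    and u_incr: "mono_on {0<..} u"
  shows "\<forall>i. \<forall>x\<in>cube Cbar.
           (\<exists>g'. continuous_on {0..Cbar} g' \<and>
              (\<forall>t\<in>{0..Cbar}. ((\<lambda>s. exp_penalty f lam (upd x i s) i)
                                    has_real_derivative g' t) (at t within {0..Cbar})))
         \<and> convex_on {0..Cbar} (\<lambda>s. exp_penalty f lam (upd x i s) i)
         \<and> (\<forall>t\<in>{0..Cbar}. continuous_on (cube Cbar) (\<lambda>y. exp_penalty f lam (upd y i t) i))
         \<and> concave_on {0..Cbar} (\<lambda>s. payoff f lam u d0 rho (upd x i s) i)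
         \<and> continuous_on (cube Cbar) (\<lambda>y. payoff f lam u d0 rho y i)"
proof (intro allI ballI conjI)
  fix i x
  interpret capacity_density f Cbar
    using F by unfold_locales
  have lam0: "0 \<le> lam" using lam by simp
  obtain u' where "\<forall>t\<in>{0<..}. (u has_real_derivative u' t) (at t)"
    using u_C1 by blast
  then have u_cont: "continuous_on {0<..} u"
    by (intro continuous_at_imp_continuous_on) (auto intro: DERIV_isCont)
  show "\<exists>g'. continuous_on {0..Cbar} g' \<and>
      (\<forall>t\<in>{0..Cbar}. ((\<lambda>s. exp_penalty f lam (upd x i s) i) has_real_derivative g' t)
        (at t within {0..Cbar}))"
    using continuous_on_subset[OF continuous_exp_penalty_slope[OF lam0]]
      has_real_derivative_exp_penalty[OF lam0]
    by (intro exI[of _ "exp_penalty_slope f lam x i"]) (auto intro: has_field_derivative_at_within)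
  show "convex_on {0..Cbar} (\<lambda>s. exp_penalty f lam (upd x i s) i)"
    by (rule convex_on_subset[OF convex_on_exp_penalty[OF lam0]]) auto
  show "continuous_on (cube Cbar) (\<lambda>y. exp_penalty f lam (upd y i t) i)" if "t \<in> {0..Cbar}" for t
    using continuous_on_exp_penalty_others[OF lam0 that] .
  show "concave_on {0..Cbar} (\<lambda>s. payoff f lam u d0 rho (upd x i s) i)"
    using concave_on_payoff[OF lam0 u_cont u_concave d0] .
  show "continuous_on (cube Cbar) (\<lambda>y. payoff f lam u d0 rho y i)"
    using continuous_on_payoff[OF lam0 u_cont d0] .
qed

end
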